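(* In every execution of the protocol Fever, the following two properties hold. (1) If a correct processor is in view $v$ at time $\mathtt t$ and in view $v'$ at a time $\mathtt t'\ge\mathtt t$, then $v'\ge v$. (2) If $v$ is initial and $0<j<k$, then no QC for view $v+j$ is formed before a QC for view $v+j-1$ has been formed.
   Context: Model. There is a set $\Pi=\{p_0,\dots,p_{n-1}\}$ of $n$ processors, and $t$ is the largest integer $<n/3$. At most $t$ processors are Byzantine (arbitrary behaviour); the others are correct. Authenticated channels, unforgeable signatures and threshold signatures are assumed. Each processor $p$ has a local clock $c(p)$. All clocks advance at the same rate as real time, except when the protocol forwards them. $\Gamma>0$ is a known constant. Underlying protocol. Views $v\in\mathbb N_{\ge0}$; a fixed integer $k\ge3$; $\mathtt{lead}(v)=p_i$ with $i=\lfloor v/k\rfloor\bmod n$; $v$ is initial iff $v\bmod k=0$. A quorum certificate (QC) for view $v$ is a threshold signature of $n-t$ distinct processors, and a correct processor contributes to a QC for view $v$ only while in view $v$. Protocol Fever. Set $\mathtt c_v=\Gamma v$. Each correct processor $p$ keeps a current view (initially $0$) and behaves as follows. (a) When $c(p)=\mathtt c_v$ for an initial view $v$, $p$ enters view $v$ and sends a $\mathtt{view}\ v$ message to $\mathtt{lead}(v)$. (b) Upon first seeing a QC for a view $v'$ at least its current view, $p$ enters view $v'+1$, and if $c(p)<\mathtt c_{v'+1}$ it sets $c(p):=\mathtt c_{v'+1}$. (c) Upon first seeing a view certificate (VC) for an initial view $v'$ greater than its current view, $p$ enters view $v'$, and if $c(p)<\mathtt c_{v'}$ it sets $c(p):=\mathtt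 c_{v'}$. (d) If $p=\mathtt{lead}(v')$ for some $v'$ at least its current view, then upon first receiving $\mathtt{view}\ v'$ messages from $t+1$ distinct processors, $p$ forms a VC (threshold signature) for $v'$ and sends it to all processors. A non-initial view is entered by a correct processor only via rule (b). *)

theory Defs
  imports Main "HOL.Real"
begin

text \<open>Processors are the naturals p < n; B is the set of Byzantine processors.
  The global state of an execution of Fever.\<close>

record fstate =
  time  :: real
  view  :: "nat \<Rightarrow> nat"
  clk   :: "nat \<Rightarrow> real"
  aDone :: "nat \<Rightarrow> nat set"    \<comment> \<open>initial views for which rule (a) has fired at p\<close>
  votes :: "nat \<Rightarrow> nat set"    \<comment> \<open>processors that contributed to a QC for view v\<close>
  qcs   :: "nat set"
  vmsgs :: "nat \<Rightarrow> nat set"    \<comment> \<open>processors that sent a (signed) view v message\<close>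
  vcs   :: "nat set"

definition fever_t :: "nat \<Rightarrow> nat" where
  "fever_t n = (n - 1) div 3"   \<comment> \<open>largest integer < n/3 (for n >= 1)\<close>

definition lead :: "nat \<Rightarrow> nat \<Rightarrow> nat \<Rightarrow> nat" where
  "lead n k v = (v div k) mod n"

definition is_initial :: "nat \<Rightarrow> nat \<Rightarrow> bool" where
  "is_initial k v \<longleftrightarrow> v mod k = 0"

definition cv :: "real \<Rightarrow> nat \<Rightarrow> real" where
  "cv \<Gamma> v = \<Gamma> * real v"

inductive fever_step :: "nat \<Rightarrow> nat \<Rightarrow> real \<Rightarrow> nat set \<Rightarrow> fstate \<Rightarrow> fstate \<Rightarrow> bool"
  for n k \<Gamma> B where
  rule_a: "\<lbrakk>p < n; p \<notin> B; is_initial k v; clk s p = cv \<Gamma> v; v \<notin> aDone s p\<rbrakk> \<Longrightarrow>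
     fever_step n k \<Gamma> B s (s\<lparr>view := (view s)(p := v),
                             aDone := (aDone s)(p := insert v (aDone s p)),
                             vmsgs := (vmsgs s)(v := insert p (vmsgs s v))\<rparr>)"
| rule_b: "\<lbrakk>p < n; p \<notin> B; v' \<in> qcs s; view s p \<le> v'\<rbrakk> \<Longrightarrow>
     fever_step n k \<Gamma> B s (s\<lparr>view := (view s)(p := Suc v'),
                             clk := (clk s)(p := max (clk s p) (cv \<Gamma> (Suc v')))\<rparr>)"
| rule_c: "\<lbrakk>p < n; p \<notin> B; is_initial k v'; v' \<in> vcs s; view s p < v'\<rbrakk> \<Longrightarrow>
     fever_step n k \<Gamma> B s (s\<lparr>view := (view s)(p := v'),
                             clk := (clk s)(p := max (clk s p) (cv \<Gamma> v'))\<rparr>)"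
  \<comment> \<open>a correct processor contributes to a QC only for its current view\<close>
| vote_correct: "\<lbrakk>p < n; p \<notin> B\<rbrakk> \<Longrightarrow>
     fever_step n k \<Gamma> B s (s\<lparr>votes := (votes s)(view s p := insert p (votes s (view s p)))\<rparr>)"
  \<comment> \<open>Byzantine processors may sign anything\<close>
| vote_byz: "\<lbrakk>q < n; q \<in> B\<rbrakk> \<Longrightarrow>
     fever_step n k \<Gamma> B s (s\<lparr>votes := (votes s)(v := insert q (votes s v))\<rparr>)"
| viewmsg_byz: "\<lbrakk>q < n; q \<in> B\<rbrakk> \<Longrightarrow>
     fever_step n k \<Gamma> B s (s\<lparr>vmsgs := (vmsgs s)(v := insert q (vmsgs s v))\<rparr>)"
  \<comment> \<open>a QC (threshold signature of n - t distinct processors) is formed\<close>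
| form_qc: "n - fever_t n \<le> card (votes s v) \<Longrightarrow>
     fever_step n k \<Gamma> B s (s\<lparr>qcs := insert v (qcs s)\<rparr>)"
  \<comment> \<open>(d) a VC (threshold signature of t+1 view messages) is formed by the leader\<close>
| form_vc: "\<lbrakk>fever_t n + 1 \<le> card (vmsgs s v);
             lead n k v \<in> B \<or> view s (lead n k v) \<le> v\<rbrakk> \<Longrightarrow>
     fever_step n k \<Gamma> B s (s\<lparr>vcs := insert v (vcs s)\<rparr>)"
  \<comment> \<open>passage of real time; clocks advance at the rate of real time; rule (a)
     must fire exactly when a clock reaches c_v for an initial v\<close>
| tick: "\<lbrakk>d > 0;
          \<forall>p<n. p \<notin> B \<longrightarrow> (\<forall>v. is_initial k v \<longrightarrow>
              \<not> (clk s p < cv \<Gamma> v \<and> cv \<Gamma> v < clk s p + d) \<and>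
              (clk s p = cv \<Gamma> v \<longrightarrow> v \<in> aDone s p))\<rbrakk> \<Longrightarrow>
     fever_step n k \<Gamma> B s (s\<lparr>time := time s + d, clk := (\<lambda>p. clk s p + d)\<rparr>)"

definition fever_init :: "fstate \<Rightarrow> bool" where
  "fever_init s \<longleftrightarrow> time s = 0 \<and> (\<forall>p. view s p = 0) \<and> (\<forall>p. aDone s p = {}) \<and>
     (\<forall>v. votes s v = {}) \<and> qcs s = {} \<and> (\<forall>v. vmsgs s v = {}) \<and> vcs s = {}"

text \<open>An execution: a sequence of global states starting in an initial state
  (arbitrary initial clock values), each step a protocol step or a stutter
  (to include finite executions).\<close>
definition fever_execution :: "nat \<Rightarrow> nat \<Rightarrow> real \<Rightarrow> nat set \<Rightarrow> (nat \<Rightarrow> fstate) \<Rightarrow> bool" where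
  "fever_execution n k \<Gamma> B ex \<longleftrightarrow> fever_init (ex 0) \<and>
     (\<forall>i. fever_step n k \<Gamma> B (ex i) (ex (Suc i)) \<or> ex (Suc i) = ex i)"

end

theory Submission
  imports Defs
begin

text \<open>A correct processor's clock never lags behind the start time of its current view,
  rules (b) and (c) only move it forward, and rule (a) fires when the clock reaches the
  start time of the new view; hence views never decrease. A QC for a non-initial view w
  needs n - t > t signatures, so some correct processor voted while in view w. That
  processor entered w by rule (b), which requires a QC for w - 1; together with the
  closure of the set of QCs under this implication, this is an inductive invariant.\<close>

definition fever_invariant :: "nat \<Rightarrow> nat \<Rightarrow> real \<Rightarrow> nat set \<Rightarrow> fstate \<Rightarrow> bool" where
  "fever_invariant n k \<Gamma> B s \<longleftrightarrow>
     (\<forall>p<n. p \<notin> B \<longrightarrow> view s p = 0 \<or> cv \<Gamma> (view s p) \<le> clk s p) \<and>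
     (\<forall>p<n. p \<notin> B \<longrightarrow> \<not> is_initial k (view s p) \<longrightarrow> view s p - 1 \<in> qcs s) \<and>
     (\<forall>w. \<forall>p \<in> votes s w. p \<notin> B \<longrightarrow> \<not> is_initial k w \<longrightarrow> w - 1 \<in> qcs s) \<and>
     (\<forall>w \<in> qcs s. \<not> is_initial k w \<longrightarrow> w - 1 \<in> qcs s)"
\<comment> \<open>The disjunct view s p = 0 is needed because initial clock values are arbitrary.\<close>

lemma fever_t_less_quorum: "n \<ge> 1 \<Longrightarrow> fever_t n < n - fever_t n"
  unfolding fever_t_def by linarith

lemma quorum_has_correct:
  assumes "finite B" "card B \<le> fever_t n" "n \<ge> 1" "n - fever_t n \<le> card V"
  shows "\<exists>p \<in> V. p \<notin> B"
proof (rule ccontr)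
  assume "\<not> (\<exists>p \<in> V. p \<notin> B)"
  then have "card V \<le> card B"
    using \<open>finite B\<close> by (intro card_mono) auto
  with assms fever_t_less_quorum show False by fastforce
qed

lemma not_initial_within_round:
  assumes "is_initial k v" "0 < j" "j < k"
  shows "\<not> is_initial k (v + j)"
  using assms by (simp add: is_initial_def mod_add_left_eq[symmetric])

lemma fever_init_invariant: "fever_init s \<Longrightarrow> fever_invariant n k \<Gamma> B s"
  by (simp add: fever_init_def fever_invariant_def is_initial_def)

lemma fever_step_invariant:
  assumes step: "fever_step n k \<Gamma> B s s'" and inv: "fever_invariant n k \<Gamma> B s"
    and "finite B" "card B \<le> fever_t n" "n \<ge> 1"
  shows "fever_invariant n k \<Gamma> B s'"
  using step
proof cases
  case (form_qc v)
  then obtain p where "p \<in> votes s v" "p \<notin> B"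
    using quorum_has_correct assms by blast
  with inv form_qc show ?thesis by (auto simp: fever_invariant_def)
qed (use inv in \<open>auto simp: fever_invariant_def\<close>)

lemma fever_step_view_mono:
  assumes step: "fever_step n k \<Gamma> B s s'" and inv: "fever_invariant n k \<Gamma> B s"
    and "\<Gamma> > 0" "p < n" "p \<notin> B"
  shows "view s p \<le> view s' p"
  using step
proof cases
  case (rule_a q v)
  show ?thesis
  proof (cases "q = p")
    case True
    with rule_a inv assms have "view s p = 0 \<or> cv \<Gamma> (view s p) \<le> cv \<Gamma> v"
      by (auto simp: fever_invariant_def)
    with \<open>\<Gamma> > 0\<close> have "view s p \<le> v"
      by (auto simp: cv_def)
    with rule_a True show ?thesis by simp
  qed (use rule_a in simp)
qed auto

lemma fever_execution_step:
  "fever_execution n k \<Gamma> B ex \<Longrightarrow> fever_step n k \<Gamma> B (ex i) (ex (Suc i)) \<or> ex (Suc i) = ex i"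
  by (simp add: fever_execution_def)

lemma fever_execution_invariant:
  assumes exec: "fever_execution n k \<Gamma> B ex"
    and "finite B" "card B \<le> fever_t n" "n \<ge> 1"
  shows "fever_invariant n k \<Gamma> B (ex i)"
proof (induction i)
  case 0
  from exec show ?case
    by (simp add: fever_execution_def fever_init_invariant)
next
  case (Suc i)
  with fever_execution_step[OF exec, of i] fever_step_invariant assms show ?case
    by auto
qed

theorem mainTheorem4:
  fixes n k :: nat and \<Gamma> :: real and B :: "nat set" and ex :: "nat \<Rightarrow> fstate"
  assumes "n \<ge> 1" and "k \<ge> 3" and "\<Gamma> > 0"
    and "B \<subseteq> {..<n}" and "card B \<le> fever_t n"
    and "fever_execution n k \<Gamma> B ex"
  shows "(\<forall>p i j. p < n \<and> p \<notin> B \<and> i \<le> j \<longrightarrow> view (ex i) p \<le> view (ex j) p) \<and>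
         (\<forall>v j i. is_initial k v \<and> 0 < j \<and> j < k \<and> v + j \<in> qcs (ex i) \<longrightarrow>
                  v + j - 1 \<in> qcs (ex i))"
proof
  have "finite B"
    using \<open>B \<subseteq> {..<n}\<close> finite_subset by blast
  then have inv: "fever_invariant n k \<Gamma> B (ex i)" for i
    using fever_execution_invariant assms by blast
  have "view (ex i) p \<le> view (ex (Suc i)) p" if "p < n" "p \<notin> B" for p i
    using fever_execution_step[OF \<open>fever_execution n k \<Gamma> B ex\<close>, of i]
      fever_step_view_mono[OF _ inv \<open>\<Gamma> > 0\<close> that] by auto
  then show "\<forall>p i j. p < n \<and> p \<notin> B \<and> i \<le> j \<longrightarrow> view (ex i) p \<le> view (ex j) p"
    by (auto intro: lift_Suc_mono_le)
  show "\<forall>v j i. is_initial k v \<and> 0 < j \<and> j < k \<and> v + j \<in> qcs (ex i) \<longrightarrow>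
                  v + j - 1 \<in> qcs (ex i)"
    using inv not_initial_within_round by (fastforce simp: fever_invariant_def)
qed

end
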